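(* Let $1\le n\le N$, $k\ge0$, $E\in\mathbb R$, $\mathbf u\in\mathbb Z^{nd}$ and $\kappa(n)=n^n$. If $M(\mathbf C^{(n)}_{L_{k+1}}(\mathbf u),E)\ge\kappa(n)+2$, then $M^{\mathrm{sep}}(\mathbf C^{(n)}_{L_{k+1}}(\mathbf u),E)\ge2$. Similarly, if $M_{\mathrm{PI}}(\mathbf C^{(n)}_{L_{k+1}}(\mathbf u),E)\ge\kappa(n)+2$, then $M^{\mathrm{sep}}_{\mathrm{PI}}(\mathbf C^{(n)}_{L_{k+1}}(\mathbf u),E)\ge2$.
   Context: Max-norm cubes $\mathbf C^{(n)}_L(\mathbf u)=\{\mathbf x\in\mathbb R^{nd}:|\mathbf x-\mathbf u|<L\}$, $\mathbf u\in\mathbb Z^{nd}$. Scales $L_0>3$, $L_k=\lfloor L_{k-1}^{3/2}\rfloor+1$. Given $m>0$, "$(E,m)$-singular" refers to a fixed property of cubes (failure of the resolvent decay bound $\|\mathbf 1_{\mathbf C^{(n,out)}_L}\mathbf G^{(n)}_{\mathbf C^{(n)}_L}(E)\mathbf 1_{\mathbf C^{(n,int)}_L}\|\le e^{-\gamma(m,L,n)L}$ or $E\in\sigma$); only the counting structure matters here. Separability: $\mathbf C^{(n)}_L(\mathbf x)$ is $\mathcal J$-separable from $\mathbf C^{(n)}_L(\mathbf y)$ if $\emptyset\ne\mathcal J\subset\{1,..,n\}$ and $\bigcup_{j\in\mathcal J}C^{(1)}_L(x_j)$ is disjoint from $\bigcup_{j\notin\mathcal J}C^{(1)}_L(x_j)\cup\bigcup_jC^{(1)}_L(y_j)$;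 a pair is separable if $|\mathbf x-\mathbf y|>7NL$ and one is $\mathcal J$-separable from the other. A cube is partially interactive (PI) if $\max_{i\ne j}|u_i-u_j|>n(2L+r_0)$. Counts: $M(\mathbf C^{(n)}_{L_{k+1}}(\mathbf u),E)$ is the maximal number of $(E,m)$-singular cubes $\mathbf C^{(n)}_{L_k}(\mathbf u^{(j)})\subset\mathbf C^{(n)}_{L_{k+1}}(\mathbf u)$ with $\mathbf u^{(j)}\in\mathbb Z^{nd}$, $\operatorname{dist}(\mathbf u^{(j)},\partial\mathbf C^{(n)}_{L_{k+1}}(\mathbf u))\ge2L_k$ and $|\mathbf u^{(j)}-\mathbf u^{(j')}|>7NL_k$ for $j\ne j'$; $M^{\mathrm{sep}}$ is the maximal number of pairwise separable $(E,m)$-singular cubes $\mathbf C^{(n)}_{L_k}(\mathbf u^{(j)})\subset\mathbf C^{(n)}_{L_{k+1}}(\mathbf u)$; $M_{\mathrm{PI}}$ is the maximal number of $(E,m)$-singular PI cubes $\mathbf C^{(n)}_{L_k}(\mathbf u^{(j)})\subset\mathbf C^{(n)}_{L_{k+1}}(\mathbf u)$ with $|\mathbf u^{(j)}-\mathbf u^{(j')}|>7NL_k$ for $j\ne j'$; $M^{\mathrm{sep}}_{\mathrm{PI}}$ is the maximal number of pairwise separable $(E,m)$-singular PI cubes $\mathbf C^{(n)}_{L_k}(\mathbf u^{(j)})\subset\mathbf C^{(n)}_{L_{k+1}}(\mathbf u)$. *)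

theory Defs
  imports Complex_Main "HOL-Library.Extended_Nat"
begin

text \<open>n-particle configurations in Z^{nd} (resp. R^{nd}): particle index i < n,
  coordinate index a < d; entries outside this range are irrelevant (lattice
  points are normalised to be 0 there).\<close>
type_synonym cfg = "nat \<Rightarrow> nat \<Rightarrow> int"
type_synonym rcfg = "nat \<Rightarrow> nat \<Rightarrow> real"

definition rof :: "cfg \<Rightarrow> rcfg" where
  "rof x = (\<lambda>i a. real_of_int (x i a))"

definition mnorm :: "nat \<Rightarrow> nat \<Rightarrow> rcfg \<Rightarrow> real" where
  "mnorm n d z = Max {\<bar>z i a\<bar> | i a. i < n \<and> a < d}"

definition norm1 :: "nat \<Rightarrow> (nat \<Rightarrow> real) \<Rightarrow> real" where
  "norm1 d w = Max {\<bar>w a\<bar> | a. a < d}"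

definition latt :: "nat \<Rightarrow> nat \<Rightarrow> cfg set" where
  "latt n d = {x. \<forall>i a. \<not> (i < n \<and> a < d) \<longrightarrow> x i a = 0}"

definition cubeN :: "nat \<Rightarrow> nat \<Rightarrow> real \<Rightarrow> cfg \<Rightarrow> rcfg set" where
  "cubeN n d L x = {z. (\<forall>i a. \<not> (i < n \<and> a < d) \<longrightarrow> z i a = 0) \<and>
                       mnorm n d (\<lambda>i a. z i a - rof x i a) < L}"

definition bdN :: "nat \<Rightarrow> nat \<Rightarrow> real \<Rightarrow> cfg \<Rightarrow> rcfg set" where
  "bdN n d L x = {z. (\<forall>i a. \<not> (i < n \<and> a < d) \<longrightarrow> z i a = 0) \<and>
                       mnorm n d (\<lambda>i a. z i a - rof x i a) = L}"

definition cube1 :: "nat \<Rightarrow> real \<Rightarrow> (nat \<Rightarrow> int) \<Rightarrow> (nat \<Rightarrow> real) set" where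
  "cube1 d L y = {z. (\<forall>a. \<not> a < d \<longrightarrow> z a = 0) \<and>
                     norm1 d (\<lambda>a. z a - real_of_int (y a)) < L}"

definition distN :: "nat \<Rightarrow> nat \<Rightarrow> rcfg \<Rightarrow> rcfg set \<Rightarrow> real" where
  "distN n d v A = Inf {mnorm n d (\<lambda>i a. v i a - z i a) | z. z \<in> A}"

definition distZ :: "nat \<Rightarrow> nat \<Rightarrow> cfg \<Rightarrow> cfg \<Rightarrow> real" where
  "distZ n d x y = mnorm n d (\<lambda>i a. rof x i a - rof y i a)"

fun Lscale :: "real \<Rightarrow> nat \<Rightarrow> real" where
  "Lscale L0 0 = L0"
| "Lscale L0 (Suc k) = real_of_int \<lfloor>Lscale L0 k powr (3/2)\<rfloor> + 1"

definition kappa :: "nat \<Rightarrow> nat" where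
  "kappa n = n ^ n"

text \<open>J-separability (particle indices 0..n-1 instead of 1..n)\<close>
definition Jsep :: "nat \<Rightarrow> nat \<Rightarrow> real \<Rightarrow> nat set \<Rightarrow> cfg \<Rightarrow> cfg \<Rightarrow> bool" where
  "Jsep n d L J x y \<longleftrightarrow> J \<noteq> {} \<and> J \<subseteq> {..<n} \<and>
     (\<Union>j\<in>J. cube1 d L (x j)) \<inter>
       ((\<Union>j\<in>{..<n} - J. cube1 d L (x j)) \<union> (\<Union>j\<in>{..<n}. cube1 d L (y j))) = {}"

definition sep_pair :: "nat \<Rightarrow> nat \<Rightarrow> nat \<Rightarrow> real \<Rightarrow> cfg \<Rightarrow> cfg \<Rightarrow> bool" where
  "sep_pair N n d L x y \<longleftrightarrow> distZ n d x y > 7 * real N * L \<and>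
     ((\<exists>J. Jsep n d L J x y) \<or> (\<exists>J. Jsep n d L J y x))"

text \<open>partially interactive cubes, r0 = interaction range\<close>
definition PI :: "nat \<Rightarrow> nat \<Rightarrow> real \<Rightarrow> real \<Rightarrow> cfg \<Rightarrow> bool" where
  "PI n d r0 L x \<longleftrightarrow> (\<exists>i<n. \<exists>j<n. i \<noteq> j \<and>
      norm1 d (\<lambda>a. real_of_int (x i a - x j a)) > real n * (2 * L + r0))"

text \<open>admissible families of centres; S is the (E,m)-singularity predicate for
  cubes C^{(n)}_{L_k}(v) (abstract, only the counting structure matters)\<close>
definition M_fam :: "(cfg \<Rightarrow> bool) \<Rightarrow> nat \<Rightarrow> nat \<Rightarrow> nat \<Rightarrow> real \<Rightarrow> real \<Rightarrow> cfg \<Rightarrow> cfg set \<Rightarrow> bool" where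
  "M_fam S N n d Lk Lk1 u U \<longleftrightarrow> U \<subseteq> latt n d \<and>
     (\<forall>v\<in>U. S v \<and> cubeN n d Lk v \<subseteq> cubeN n d Lk1 u \<and>
              distN n d (rof v) (bdN n d Lk1 u) \<ge> 2 * Lk) \<and>
     (\<forall>v\<in>U. \<forall>w\<in>U. v \<noteq> w \<longrightarrow> distZ n d v w > 7 * real N * Lk)"

definition Msep_fam :: "(cfg \<Rightarrow> bool) \<Rightarrow> nat \<Rightarrow> nat \<Rightarrow> nat \<Rightarrow> real \<Rightarrow> real \<Rightarrow> cfg \<Rightarrow> cfg set \<Rightarrow> bool" where
  "Msep_fam S N n d Lk Lk1 u U \<longleftrightarrow> U \<subseteq> latt n d \<and>
     (\<forall>v\<in>U. S v \<and> cubeN n d Lk v \<subseteq> cubeN n d Lk1 u) \<and>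
     (\<forall>v\<in>U. \<forall>w\<in>U. v \<noteq> w \<longrightarrow> sep_pair N n d Lk v w)"

definition MPI_fam :: "(cfg \<Rightarrow> bool) \<Rightarrow> real \<Rightarrow> nat \<Rightarrow> nat \<Rightarrow> nat \<Rightarrow> real \<Rightarrow> real \<Rightarrow> cfg \<Rightarrow> cfg set \<Rightarrow> bool" where
  "MPI_fam S r0 N n d Lk Lk1 u U \<longleftrightarrow> U \<subseteq> latt n d \<and>
     (\<forall>v\<in>U. S v \<and> PI n d r0 Lk v \<and> cubeN n d Lk v \<subseteq> cubeN n d Lk1 u) \<and>
     (\<forall>v\<in>U. \<forall>w\<in>U. v \<noteq> w \<longrightarrow> distZ n d v w > 7 * real N * Lk)"

definition MsepPI_fam :: "(cfg \<Rightarrow> bool) \<Rightarrow> real \<Rightarrow> nat \<Rightarrow> nat \<Rightarrow> nat \<Rightarrow> real \<Rightarrow> real \<Rightarrow> cfg \<Rightarrow> cfg set \<Rightarrow> bool" where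
  "MsepPI_fam S r0 N n d Lk Lk1 u U \<longleftrightarrow> U \<subseteq> latt n d \<and>
     (\<forall>v\<in>U. S v \<and> PI n d r0 Lk v \<and> cubeN n d Lk v \<subseteq> cubeN n d Lk1 u) \<and>
     (\<forall>v\<in>U. \<forall>w\<in>U. v \<noteq> w \<longrightarrow> sep_pair N n d Lk v w)"

definition maxcount :: "('a set \<Rightarrow> bool) \<Rightarrow> enat" where
  "maxcount F = (SUP U\<in>{U. finite U \<and> F U}. enat (card U))"

end

theory Submission
  imports Defs "HOL-Library.FuncSet"
begin

text \<open>If a cube with centre \<open>y\<close> is not separable from the cube with centre \<open>x\<close>, every
  particle \<open>y j\<close> lies within distance \<open>2nL\<close> of some particle of \<open>x\<close>: otherwise, sorting the
  particles of \<open>y\<close> by their distance to \<open>x\<close>, one of the \<open>n\<close> layers \<open>[2mL, 2(m+1)L)\<close>, \<open>m < n\<close>,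
  is empty, and the particles beyond it form a separable set \<open>J\<close>. Now take \<kappa>(n) + 2 singular
  cubes at mutual distance \<open>> 7NL\<close>, no two of them separable, and fix one, \<open>v\<close>. Each of the
  \<kappa>(n) + 1 others determines a map \<open>{..<n} \<rightarrow> {..<n}\<close> sending a particle to a nearby particle
  of \<open>v\<close>; two of them share this map, so they are at distance \<open>< 4nL \<le> 7NL\<close>, a contradiction.\<close>

lemma norm1_eq_Max: "norm1 d w = Max ((\<lambda>a. \<bar>w a\<bar>) ` {..<d})"
  unfolding norm1_def by (rule arg_cong[of _ _ Max]) auto

lemma abs_le_norm1: "a < d \<Longrightarrow> \<bar>w a\<bar> \<le> norm1 d w"
  unfolding norm1_eq_Max by (rule Max_ge) auto

lemma norm1_lessI: "1 \<le> d \<Longrightarrow> (\<And>a. a < d \<Longrightarrow> \<bar>w a\<bar> < c) \<Longrightarrow> norm1 d w < c"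
  unfolding norm1_eq_Max by (subst Max_less_iff) (auto simp: lessThan_empty_iff)

lemma norm1_leI: "1 \<le> d \<Longrightarrow> (\<And>a. a < d \<Longrightarrow> \<bar>w a\<bar> \<le> c) \<Longrightarrow> norm1 d w \<le> c"
  unfolding norm1_eq_Max by (subst Max_le_iff) (auto simp: lessThan_empty_iff)

lemma mnorm_eq_Max: "mnorm n d z = Max ((\<lambda>(i, a). \<bar>z i a\<bar>) ` ({..<n} \<times> {..<d}))"
  unfolding mnorm_def by (rule arg_cong[of _ _ Max]) auto

lemma mnorm_lessI:
  "1 \<le> n \<Longrightarrow> 1 \<le> d \<Longrightarrow> (\<And>i a. i < n \<Longrightarrow> a < d \<Longrightarrow> \<bar>z i a\<bar> < c) \<Longrightarrow> mnorm n d z < c"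
  unfolding mnorm_eq_Max by (subst Max_less_iff) (auto simp: lessThan_empty_iff)

lemma distZ_commute: "distZ n d x y = distZ n d y x"
  unfolding distZ_def mnorm_def by (rule arg_cong[of _ _ Max]) (auto simp: abs_minus_commute)

lemma sep_pair_commute: "sep_pair N n d L x y = sep_pair N n d L y x"
  unfolding sep_pair_def using distZ_commute by metis

definition dist1 :: "nat \<Rightarrow> (nat \<Rightarrow> int) \<Rightarrow> (nat \<Rightarrow> int) \<Rightarrow> real" where
  "dist1 d p q = norm1 d (\<lambda>a. real_of_int (p a) - real_of_int (q a))"

lemma abs_le_dist1: "a < d \<Longrightarrow> \<bar>real_of_int (p a) - real_of_int (q a)\<bar> \<le> dist1 d p q"
  unfolding dist1_def by (rule abs_le_norm1)

lemma dist1_triangle: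
  assumes "1 \<le> d"
  shows "dist1 d p r \<le> dist1 d p q + dist1 d q r"
  unfolding dist1_def[of d p r]
proof (rule norm1_leI[OF assms])
  fix a assume "a < d"
  then show "\<bar>real_of_int (p a) - real_of_int (r a)\<bar> \<le> dist1 d p q + dist1 d q r"
    using abs_le_dist1[of a d p q] abs_le_dist1[of a d q r] by linarith
qed

lemma cube1_disjoint:
  assumes "1 \<le> d" and "dist1 d p q \<ge> 2 * L"
  shows "cube1 d L p \<inter> cube1 d L q = {}"
proof (rule ccontr)
  assume "cube1 d L p \<inter> cube1 d L q \<noteq> {}"
  then obtain z where zp: "norm1 d (\<lambda>a. z a - real_of_int (p a)) < L"
    and zq: "norm1 d (\<lambda>a. z a - real_of_int (q a)) < L"
    unfolding cube1_def by auto
  have "dist1 d p q < 2 * L"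
    unfolding dist1_def
  proof (rule norm1_lessI[OF assms(1)])
    fix a assume a: "a < d"
    show "\<bar>real_of_int (p a) - real_of_int (q a)\<bar> < 2 * L"
      using abs_le_norm1[OF a, of "\<lambda>a. z a - real_of_int (p a)"]
        abs_le_norm1[OF a, of "\<lambda>a. z a - real_of_int (q a)"] zp zq by linarith
  qed
  with assms(2) show False by simp
qed

lemma JsepI:
  assumes "1 \<le> d" and "J \<noteq> {}" and "J \<subseteq> {..<n}"
    and "\<And>j j'. j \<in> J \<Longrightarrow> j' < n \<Longrightarrow> j' \<notin> J \<Longrightarrow> dist1 d (y j) (y j') \<ge> 2 * L"
    and "\<And>j i. j \<in> J \<Longrightarrow> i < n \<Longrightarrow> dist1 d (y j) (x i) \<ge> 2 * L"
  shows "Jsep n d L J y x"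
proof -
  have "cube1 d L (y j) \<inter> cube1 d L (y j') = {}" if "j \<in> J" "j' \<in> {..<n} - J" for j j'
    using cube1_disjoint[OF assms(1) assms(4)] that by auto
  moreover have "cube1 d L (y j) \<inter> cube1 d L (x i) = {}" if "j \<in> J" "i \<in> {..<n}" for j i
    using cube1_disjoint[OF assms(1) assms(5)] that by auto
  ultimately show ?thesis
    unfolding Jsep_def using assms(2,3) by blast
qed

lemma not_Jsep_imp_close:
  assumes L: "L > 0" and n: "1 \<le> n" and d: "1 \<le> d"
    and not_sep: "\<not> (\<exists>J. Jsep n d L J y x)" and j0: "j0 < n"
  shows "\<exists>i<n. dist1 d (y j0) (x i) < 2 * real n * L"
proof (rule ccontr)
  assume far: "\<not> (\<exists>i<n. dist1 d (y j0) (x i) < 2 * real n * L)"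
  define D where "D j = Min ((\<lambda>i. dist1 d (y j) (x i)) ` {..<n})" for j
  have D_le: "D j \<le> dist1 d (y j) (x i)" if "i < n" for j i
    unfolding D_def using that by (intro Min_le) auto
  have D_attained: "\<exists>i<n. D j = dist1 d (y j) (x i)" for j
  proof -
    have "D j \<in> (\<lambda>i. dist1 d (y j) (x i)) ` {..<n}"
      unfolding D_def using n by (intro Min_in) (auto simp: lessThan_empty_iff)
    then show ?thesis by auto
  qed
  have D_j0: "D j0 \<ge> 2 * real n * L"
    using D_attained[of j0] far by force
  define layer where "layer j = \<lfloor>D j / (2 * L)\<rfloor>" for j
  have "card (layer ` ({..<n} - {j0})) < card {0..<int n}"
    using card_image_le[of "{..<n} - {j0}" layer] j0 n by simp
  then obtain m where m: "0 \<le> m" "m < int n" "m \<notin> layer ` ({..<n} - {j0})"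
    using card_mono[of "layer ` ({..<n} - {j0})" "{0..<int n}"] by fastforce
  have "D j0 / (2 * L) \<ge> real n" using D_j0 L by (simp add: field_simps)
  then have "layer j0 \<ge> int n" unfolding layer_def by (simp add: le_floor_iff)
  then have layer_ne: "layer j \<noteq> m" if "j < n" for j
    using m that by (cases "j = j0") auto
  define J where "J = {j. j < n \<and> D j \<ge> 2 * (real_of_int m + 1) * L}"
  have above_gap: "D j \<ge> 2 * (real_of_int m + 1) * L" if "j \<in> J" for j
    using that unfolding J_def by simp
  have below_gap: "D j < 2 * real_of_int m * L" if "j < n" "j \<notin> J" for j
  proof -
    have "D j < 2 * (real_of_int m + 1) * L" using that unfolding J_def by auto
    then have "D j / (2 * L) < real_of_int m + 1"
      using L by (simp add: pos_divide_less_eq mult.commute mult.left_commute)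
    then have "layer j < m + 1"
      unfolding layer_def using floor_less_iff[of "D j / (2 * L)" "m + 1"] by simp
    with layer_ne[OF that(1)] have "layer j < m" by simp
    then have "D j / (2 * L) < real_of_int m"
      unfolding layer_def by (simp add: floor_less_iff)
    with L show ?thesis by (simp add: pos_divide_less_eq mult.commute mult.left_commute)
  qed
  have "Jsep n d L J y x"
  proof (rule JsepI[OF d])
    have "2 * (real_of_int m + 1) * L \<le> 2 * real n * L"
      using m L by (intro mult_right_mono) auto
    then show "J \<noteq> {}" unfolding J_def using j0 D_j0 by auto
    show "J \<subseteq> {..<n}" unfolding J_def by auto
  next
    fix j j' assume "j \<in> J" "j' < n" "j' \<notin> J"
    obtain i' where i': "i' < n" "D j' = dist1 d (y j') (x i')" using D_attained by blast
    have "D j \<le> dist1 d (y j) (y j') + D j'"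
      using D_le[OF i'(1), of j] dist1_triangle[OF d, of "y j" "x i'" "y j'"] i'(2) by linarith
    then show "dist1 d (y j) (y j') \<ge> 2 * L"
      using above_gap[OF \<open>j \<in> J\<close>] below_gap[OF \<open>j' < n\<close> \<open>j' \<notin> J\<close>]
      by (simp add: algebra_simps)
  next
    fix j i assume "j \<in> J" "i < n"
    moreover have "2 * L \<le> 2 * (real_of_int m + 1) * L" using L m(1) by simp
    ultimately show "dist1 d (y j) (x i) \<ge> 2 * L"
      using D_le[of i j] above_gap by fastforce
  qed
  with not_sep show False by blast
qed

lemma close_pair_if_near_common_cfg:
  assumes n: "1 \<le> n" and d: "1 \<le> d" and card_W: "card W > n ^ n"
    and near: "\<And>w j. w \<in> W \<Longrightarrow> j < n \<Longrightarrow> \<exists>i<n. dist1 d (w j) (v i) < R"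
  shows "\<exists>w1\<in>W. \<exists>w2\<in>W. w1 \<noteq> w2 \<and> distZ n d w1 w2 < 2 * R"
proof -
  define pattern where
    "pattern w = (\<lambda>j\<in>{..<n}. SOME i. i < n \<and> dist1 d (w j) (v i) < R)" for w
  have pattern: "pattern w j < n \<and> dist1 d (w j) (v (pattern w j)) < R" if "w \<in> W" "j < n" for w j
    using someI_ex[OF near[OF that]] that(2) by (simp add: pattern_def)
  have "pattern w \<in> {..<n} \<rightarrow>\<^sub>E {..<n}" if "w \<in> W" for w
    unfolding pattern_def restrict_PiE_iff using pattern[OF that] by (simp add: pattern_def)
  then have "pattern ` W \<subseteq> {..<n} \<rightarrow>\<^sub>E {..<n}"
    by blast
  moreover have "card ({..<n} \<rightarrow>\<^sub>E {..<n}) = n ^ n"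
    by (simp add: card_PiE)
  ultimately have "\<not> inj_on pattern W"
    using card_W card_inj_on_le[of pattern W "{..<n} \<rightarrow>\<^sub>E {..<n}"] by (auto simp: finite_PiE)
  then obtain w1 w2 where w: "w1 \<in> W" "w2 \<in> W" "w1 \<noteq> w2" "pattern w1 = pattern w2"
    unfolding inj_on_def by auto
  have "distZ n d w1 w2 < 2 * R"
    unfolding distZ_def
  proof (rule mnorm_lessI[OF n d])
    fix j a assume j: "j < n" and a: "a < d"
    let ?c = "v (pattern w1 j)"
    have "dist1 d (w1 j) ?c < R" "dist1 d (w2 j) ?c < R"
      using pattern[OF w(1) j] pattern[OF w(2) j] w(4) by auto
    then show "\<bar>rof w1 j a - rof w2 j a\<bar> < 2 * R"
      using abs_le_dist1[OF a, of "w1 j" ?c] abs_le_dist1[OF a, of "w2 j" ?c]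
      unfolding rof_def by linarith
  qed
  with w show ?thesis by blast
qed

lemma pairwise_far_imp_sep_pair:
  assumes L: "L > 0" and n: "1 \<le> n" "n \<le> N" and d: "1 \<le> d"
    and card_U: "card U \<ge> n ^ n + 2"
    and far: "\<forall>v\<in>U. \<forall>w\<in>U. v \<noteq> w \<longrightarrow> distZ n d v w > 7 * real N * L"
  shows "\<exists>v\<in>U. \<exists>w\<in>U. v \<noteq> w \<and> sep_pair N n d L v w"
proof (rule ccontr)
  assume no_sep: "\<not> ?thesis"
  from card_U have "card U > 0" by simp
  then obtain v where v: "v \<in> U" and "finite U"
    unfolding card_gt_0_iff by blast
  then have "card (U - {v}) > n ^ n" using card_U by simp
  moreover have "\<exists>i<n. dist1 d (w j) (v i) < 2 * real n * L" if "w \<in> U - {v}" "j < n" for w j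
  proof -
    have "distZ n d v w > 7 * real N * L" "\<not> sep_pair N n d L v w"
      using that far no_sep v by auto
    then have "\<not> (\<exists>J. Jsep n d L J w v)" unfolding sep_pair_def by auto
    then show ?thesis using not_Jsep_imp_close[OF L n(1) d _ that(2)] by blast
  qed
  ultimately obtain w1 w2 where w: "w1 \<in> U - {v}" "w2 \<in> U - {v}" "w1 \<noteq> w2"
    and "distZ n d w1 w2 < 2 * (2 * real n * L)"
    using close_pair_if_near_common_cfg[OF n(1) d] by blast
  moreover have "4 * real n * L \<le> 7 * real N * L"
    using n L by (intro mult_right_mono) auto
  moreover have "distZ n d w1 w2 > 7 * real N * L" using far w by auto
  ultimately show False by linarith
qed

lemma maxcount_geD:
  assumes "maxcount F \<ge> enat m" and "1 \<le> m"
  shows "\<exists>U. finite U \<and> F U \<and> card U \<ge> m"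
proof (rule ccontr)
  assume "\<not> ?thesis"
  then have "maxcount F \<le> enat (m - 1)"
    unfolding maxcount_def by (intro SUP_least) auto
  with assms(1) have "enat m \<le> enat (m - 1)" by (rule order_trans)
  with assms(2) show False by simp
qed

lemma card_le_maxcount: "finite U \<Longrightarrow> F U \<Longrightarrow> enat (card U) \<le> maxcount F"
  unfolding maxcount_def by (rule SUP_upper) auto

lemma maxcount_sep_ge_2:
  assumes L: "L > 0" and n: "1 \<le> n" "n \<le> N" and d: "1 \<le> d"
    and far: "\<And>U. F U \<Longrightarrow> \<forall>v\<in>U. \<forall>w\<in>U. v \<noteq> w \<longrightarrow> distZ n d v w > 7 * real N * L"
    and sep: "\<And>U v w. F U \<Longrightarrow> v \<in> U \<Longrightarrow> w \<in> U \<Longrightarrow> sep_pair N n d L v w \<Longrightarrow> G {v, w}"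
    and many: "maxcount F \<ge> enat (n ^ n + 2)"
  shows "maxcount G \<ge> 2"
proof -
  obtain U where U: "finite U" "F U" "card U \<ge> n ^ n + 2"
    using maxcount_geD[OF many] by auto
  then obtain v w where "v \<in> U" "w \<in> U" "v \<noteq> w" "sep_pair N n d L v w"
    using pairwise_far_imp_sep_pair[OF L n d U(3) far] by blast
  then have "G {v, w}" "card {v, w} = 2"
    using sep[OF U(2)] by auto
  then show ?thesis
    using card_le_maxcount[of "{v, w}" G] by (simp add: numeral_eq_enat)
qed

lemma Lscale_gt_3: "L0 > 3 \<Longrightarrow> Lscale L0 k > 3"
proof (induction k)
  case 0
  then show ?case by simp
next
  case (Suc k)
  have "Lscale L0 k powr (3/2) \<ge> Lscale L0 k powr 1"
    using Suc by (intro powr_mono) auto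
  with Suc show ?case by simp
qed

theorem mainTheorem13:
  fixes sing :: "nat \<Rightarrow> real \<Rightarrow> real \<Rightarrow> cfg \<Rightarrow> bool"
    and N n d k :: nat and E L0 r0 :: real and u :: cfg
  assumes "1 \<le> n" and "n \<le> N" and "1 \<le> d" and "L0 > 3" and "u \<in> latt n d"
  defines "Lk \<equiv> Lscale L0 k" and "Lk1 \<equiv> Lscale L0 (Suc k)"
  shows "(maxcount (M_fam (sing n E Lk) N n d Lk Lk1 u) \<ge> enat (kappa n + 2)
            \<longrightarrow> maxcount (Msep_fam (sing n E Lk) N n d Lk Lk1 u) \<ge> 2)
       \<and> (maxcount (MPI_fam (sing n E Lk) r0 N n d Lk Lk1 u) \<ge> enat (kappa n + 2)
            \<longrightarrow> maxcount (MsepPI_fam (sing n E Lk) r0 N n d Lk Lk1 u) \<ge> 2)"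
proof (intro conjI impI)
  have L: "Lk > 0" unfolding Lk_def using Lscale_gt_3[OF assms(4), of k] by linarith
  note sep_ge_2 = maxcount_sep_ge_2[OF L assms(1-3)]
  show "maxcount (Msep_fam (sing n E Lk) N n d Lk Lk1 u) \<ge> 2"
    if "maxcount (M_fam (sing n E Lk) N n d Lk Lk1 u) \<ge> enat (kappa n + 2)"
    using that sep_pair_commute unfolding kappa_def
    by (intro sep_ge_2) (auto simp: M_fam_def Msep_fam_def)
  show "maxcount (MsepPI_fam (sing n E Lk) r0 N n d Lk Lk1 u) \<ge> 2"
    if "maxcount (MPI_fam (sing n E Lk) r0 N n d Lk Lk1 u) \<ge> enat (kappa n + 2)"
    using that sep_pair_commute unfolding kappa_def
    by (intro sep_ge_2) (auto simp: MPI_fam_def MsepPI_fam_def)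
qed

end
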